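(* For $\alpha\ge-1/2$ define the infinite matrix $h_{\mathbb{N}}^{[\alpha]}$ by $$\big(h_{\mathbb{N}}^{[\alpha]}\big)_{jk}=2^{1+2\alpha}\int_0^1\sin\Big(\frac{\pi x}{2}\Big)^{2\alpha}\sin(j\pi x)\sin(k\pi x)\,\mathrm{d}x,\qquad j,k\in\mathbb{N}.$$ For $n,m\in\mathbb{N}$ with $n\le m$ let $\Lambda_0=[1,n]\cap\mathbb{N}$ and $\Lambda=[1,m]\cap\mathbb{N}$, and let $h_\Lambda^{[\alpha]}=\iota_{\Lambda_0}^*(\overline{h}^{(q)}_\Lambda)^\alpha\iota_{\Lambda_0}$. Then, uniformly in $j,k\in\{1,\dots,|\Lambda_0|\}$, $$\big(h_\Lambda^{[\alpha]}\big)_{jk}=\big(h_{\mathbb{N}}^{[\alpha]}\big)_{jk}+\mathcal{O}\Big(\frac{|\Lambda_0|}{|\Lambda|}\Big)\quad\text{for }\alpha\ge0,$$ $$\big(h_\Lambda^{[\alpha]}\big)_{jk}=\big(h_{\mathbb{N}}^{[\alpha]}\big)_{jk}+\mathcal{O}\Big(\frac{|\Lambda_0|^{1-2\alpha}}{|\Lambda|}\Big)\quad\text{for }\alpha\in[-1/2,0).$$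
   Context: $\overline{h}^{(q)}_\Lambda$ is the $|\Lambda|\times|\Lambda|$ matrix with entries $2$ on the diagonal, $-1$ for $|x-y|=1$, and $0$ otherwise (positive definite); $\iota_{\Lambda_0}:\mathbb{R}^{|\Lambda_0|}\hookrightarrow\mathbb{R}^{|\Lambda|}$ is the canonical embedding. The $\mathcal{O}$-terms are bounded by a constant (depending on $\alpha$ only) times the displayed quantity, uniformly in $n\le m$ and $j,k$. *)

theory Defs
  imports "HOL-Analysis.Analysis"
begin

text \<open>Finite matrices are represented as functions nat => nat => real, indexed by
  {1..m} x {1..m} (the lattice Lambda = [1,m] cap N).\<close>

definition hbar :: "nat \<Rightarrow> nat \<Rightarrow> nat \<Rightarrow> real" where
  "hbar m x y = (if x = y then 2 else if x = y + 1 \<or> y = x + 1 then -1 else 0)"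

definition mat_powr :: "nat \<Rightarrow> (nat \<Rightarrow> nat \<Rightarrow> real) \<Rightarrow> real \<Rightarrow> nat \<Rightarrow> nat \<Rightarrow> real" where
  "mat_powr m A \<alpha> = (SOME B. \<exists>U d.
      (\<forall>i\<in>{1..m}. \<forall>j\<in>{1..m}. (\<Sum>l\<in>{1..m}. U i l * U j l) = (if i = j then 1 else 0)) \<and>
      (\<forall>l\<in>{1..m}. d l > 0) \<and>
      (\<forall>i\<in>{1..m}. \<forall>j\<in>{1..m}. A i j = (\<Sum>l\<in>{1..m}. U i l * d l * U j l)) \<and>
      B = (\<lambda>i j. \<Sum>l\<in>{1..m}. U i l * d l powr \<alpha> * U j l))"

text \<open>h_Lambda^[alpha] = iota_{Lambda_0}^* (hbar_Lambda)^alpha iota_{Lambda_0},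
  Lambda_0 = {1..n}, Lambda = {1..m}.\<close>
definition h_Lambda :: "real \<Rightarrow> nat \<Rightarrow> nat \<Rightarrow> nat \<Rightarrow> nat \<Rightarrow> real" where
  "h_Lambda \<alpha> n m j k =
     (if j \<in> {1..n} \<and> k \<in> {1..n} then mat_powr m (hbar m) \<alpha> j k else 0)"

definition h_N :: "real \<Rightarrow> nat \<Rightarrow> nat \<Rightarrow> real" where
  "h_N \<alpha> j k = 2 powr (1 + 2 * \<alpha>) *
     integral {0..1} (\<lambda>x::real. sin (pi * x / 2) powr (2 * \<alpha>) * sin (real j * pi * x) * sin (real k * pi * x))"

end

(*
  The Dirichlet Laplacian hbar on {1..m} is diagonalised by the discrete sine transform, with
  eigenvalues 4 sin(pi l / (2 (m + 1)))^2. Hence every entry of hbar^alpha is exactly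
  2^(1 + 2 alpha) times a left Riemann sum, on the grid l / (m + 1), of the integrand
  g(x) = sin(pi x / 2)^(2 alpha) sin(j pi x) sin(k pi x) that defines h_N. The error of such a
  Riemann sum is at most Lip(g) / (m + 1), and for j, k \<le> n the Lipschitz constant of g is
  O(n) when alpha \<ge> 0 and O(n^(1 - 2 alpha)) when -1/2 \<le> alpha < 0: near 0 the singular factor
  sin(pi x / 2)^(2 alpha) is compensated by sin(j pi x) = O(n x).
*)
theory Submission
  imports Defs "Jordan_Normal_Form.Determinant"
begin

section \<open>Orthogonal diagonalisation and the functional calculus\<close>

definition orthonormal_rows :: "'a set \<Rightarrow> ('a \<Rightarrow> 'a \<Rightarrow> real) \<Rightarrow> bool" where
  "orthonormal_rows I U \<longleftrightarrow>
     (\<forall>i\<in>I. \<forall>j\<in>I. (\<Sum>l\<in>I. U i l * U j l) = (if i = j then 1 else 0))"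

definition diag_conj :: "'a set \<Rightarrow> ('a \<Rightarrow> 'a \<Rightarrow> real) \<Rightarrow> ('a \<Rightarrow> real) \<Rightarrow> 'a \<Rightarrow> 'a \<Rightarrow> real" where
  "diag_conj I U d i j = (\<Sum>l\<in>I. U i l * d l * U j l)"

lemma orthonormal_rowsD:
  "orthonormal_rows I U \<Longrightarrow> i \<in> I \<Longrightarrow> j \<in> I \<Longrightarrow>
     (\<Sum>l\<in>I. U i l * U j l) = (if i = j then 1 else 0)"
  unfolding orthonormal_rows_def by blast

text \<open>For square matrices a one-sided inverse is two-sided; this comes from the
  determinant theory of Jordan_Normal_Form.\<close>
lemma orthonormal_rows_transpose:
  fixes m :: nat
  assumes "orthonormal_rows {1..m} U"
  shows "orthonormal_rows {1..m} (\<lambda>i j. U j i)"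
proof -
  define A where "A = mat m m (\<lambda>(i, j). U (Suc i) (Suc j))"
  have A: "A \<in> carrier_mat m m" "A\<^sup>T \<in> carrier_mat m m"
    unfolding A_def by auto
  have "A * A\<^sup>T = 1\<^sub>m m"
  proof (rule eq_matI)
    fix i j assume "i < dim_row (1\<^sub>m m)" "j < dim_col (1\<^sub>m m)"
    then have ij: "i < m" "j < m" by auto
    have "(A * A\<^sup>T) $$ (i, j) = (\<Sum>l\<in>{1..m}. U (Suc i) l * U (Suc j) l)"
      using ij by (simp add: A_def scalar_prod_def sum.atLeast1_atMost_eq atLeast0LessThan)
    also have "\<dots> = 1\<^sub>m m $$ (i, j)"
      using ij orthonormal_rowsD[OF assms, of "Suc i" "Suc j"] by simp
    finally show "(A * A\<^sup>T) $$ (i, j) = 1\<^sub>m m $$ (i, j)" .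
  qed (use A in auto)
  then have transpose_inverse: "A\<^sup>T * A = 1\<^sub>m m"
    by (rule mat_mult_left_right_inverse[OF A])
  show ?thesis
    unfolding orthonormal_rows_def
  proof (intro ballI)
    fix i j assume "i \<in> {1..m}" "j \<in> {1..m}"
    then obtain i' j' where ij: "i = Suc i'" "j = Suc j'" "i' < m" "j' < m"
      by (cases i; cases j) auto
    have "(\<Sum>l\<in>{1..m}. U l i * U l j) = (A\<^sup>T * A) $$ (i', j')"
      using ij by (simp add: A_def scalar_prod_def sum.atLeast1_atMost_eq atLeast0LessThan)
    then show "(\<Sum>l\<in>{1..m}. U l i * U l j) = (if i = j then 1 else 0)"
      using ij by (simp add: transpose_inverse)
  qed
qed

lemma diag_conj_mult_column:
  assumes "finite I" "orthonormal_rows I (\<lambda>i j. U j i)" "l \<in> I"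
  shows "(\<Sum>j\<in>I. diag_conj I U d i j * U j l) = d l * U i l"
proof -
  have "(\<Sum>j\<in>I. diag_conj I U d i j * U j l) = (\<Sum>l'\<in>I. U i l' * d l' * (\<Sum>j\<in>I. U j l' * U j l))"
    unfolding diag_conj_def sum_distrib_right sum_distrib_left
    by (subst sum.swap) (simp add: algebra_simps)
  also have "\<dots> = (\<Sum>l'\<in>I. if l' = l then U i l' * d l' else 0)"
    using orthonormal_rowsD[OF assms(2) _ assms(3)] by (intro sum.cong refl) simp
  also have "\<dots> = d l * U i l"
    using assms(1,3) by simp
  finally show ?thesis .
qed

lemma diag_conj_sym: "diag_conj I U d i j = diag_conj I U d j i"
  unfolding diag_conj_def by (intro sum.cong refl) (simp add: algebra_simps)

lemma diag_conj_overlap_eigen: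
  assumes fin: "finite I"
    and U: "orthonormal_rows I (\<lambda>i j. U j i)" and V: "orthonormal_rows I (\<lambda>i j. V j i)"
    and same: "\<And>i j. i \<in> I \<Longrightarrow> j \<in> I \<Longrightarrow> diag_conj I U d i j = diag_conj I V e i j"
    and k: "k \<in> I" and l: "l \<in> I"
  shows "e k * (\<Sum>i\<in>I. V i k * U i l) = d l * (\<Sum>i\<in>I. V i k * U i l)"
proof -
  let ?A = "diag_conj I U d"
  have "e k * (\<Sum>i\<in>I. V i k * U i l) = (\<Sum>i\<in>I. (\<Sum>j\<in>I. diag_conj I V e i j * V j k) * U i l)"
    using diag_conj_mult_column[OF fin V k] by (simp add: sum_distrib_left algebra_simps)
  also have "\<dots> = (\<Sum>i\<in>I. \<Sum>j\<in>I. V j k * (?A j i * U i l))"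
    unfolding sum_distrib_right
    by (intro sum.cong refl) (simp add: same diag_conj_sym[of I U d] algebra_simps)
  also have "\<dots> = (\<Sum>j\<in>I. V j k * (\<Sum>i\<in>I. ?A j i * U i l))"
    by (subst sum.swap) (simp add: sum_distrib_left)
  also have "\<dots> = d l * (\<Sum>i\<in>I. V i k * U i l)"
    using diag_conj_mult_column[OF fin U l] by (simp add: sum_distrib_left algebra_simps)
  finally show ?thesis .
qed

lemma sum_orthonormal_expansion:
  assumes "finite I" "orthonormal_rows I V" "i \<in> I"
  shows "(\<Sum>k\<in>I. V i k * (\<Sum>p\<in>I. V p k * x p)) = x i"
proof -
  have "(\<Sum>k\<in>I. V i k * (\<Sum>p\<in>I. V p k * x p)) = (\<Sum>p\<in>I. (\<Sum>k\<in>I. V i k * V p k) * x p)"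
    unfolding sum_distrib_left sum_distrib_right by (subst sum.swap) (simp add: algebra_simps)
  also have "\<dots> = (\<Sum>p\<in>I. if p = i then x p else 0)"
    using orthonormal_rowsD[OF assms(2,3)] by (intro sum.cong refl) auto
  finally show ?thesis
    using assms(1,3) by simp
qed

text \<open>mat_powr picks an arbitrary diagonalisation, and this lemma shows that the choice
  does not matter: the overlaps c k l of the two eigenbases satisfy e k c k l = d l c k l, so
  f (e k) and f (d l) can be exchanged under them.\<close>
lemma diag_conj_fun_eq:
  assumes fin: "finite I"
    and U: "orthonormal_rows I U" "orthonormal_rows I (\<lambda>i j. U j i)"
    and V: "orthonormal_rows I V" "orthonormal_rows I (\<lambda>i j. V j i)"
    and same: "\<And>i j. i \<in> I \<Longrightarrow> j \<in> I \<Longrightarrow> diag_conj I U d i j = diag_conj I V e i j"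
    and i: "i \<in> I" and j: "j \<in> I"
  shows "diag_conj I U (\<lambda>l. f (d l)) i j = diag_conj I V (\<lambda>k. f (e k)) i j"
proof -
  define c where "c k l = (\<Sum>p\<in>I. V p k * U p l)" for k l
  have f_overlap: "f (d l) * c k l = f (e k) * c k l" if "k \<in> I" "l \<in> I" for k l
    using diag_conj_overlap_eigen[OF fin U(2) V(2) same that] unfolding c_def
    by (cases "c k l = 0") (auto simp: c_def)
  have "diag_conj I U (\<lambda>l. f (d l)) i j = (\<Sum>l\<in>I. (\<Sum>k\<in>I. V i k * c k l) * f (d l) * U j l)"
    unfolding diag_conj_def c_def using sum_orthonormal_expansion[OF fin V(1) i] by simp
  also have "\<dots> = (\<Sum>l\<in>I. \<Sum>k\<in>I. V i k * U j l * (f (d l) * c k l))"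
    unfolding sum_distrib_right by (intro sum.cong refl) (simp add: algebra_simps)
  also have "\<dots> = (\<Sum>l\<in>I. \<Sum>k\<in>I. V i k * U j l * (f (e k) * c k l))"
    using f_overlap by (intro sum.cong refl) simp
  also have "\<dots> = (\<Sum>k\<in>I. V i k * f (e k) * (\<Sum>l\<in>I. U j l * c k l))"
    unfolding sum_distrib_left by (subst sum.swap) (intro sum.cong refl; simp add: algebra_simps)
  also have "\<dots> = diag_conj I V (\<lambda>k. f (e k)) i j"
    unfolding diag_conj_def c_def
    using sum_orthonormal_expansion[OF fin U(1) j, of "\<lambda>p. V p _"] by (simp add: mult.commute)
  finally show ?thesis .
qed

lemma mat_powr_eq_diag_conj:
  fixes m :: nat
  assumes U: "orthonormal_rows {1..m} U" and d: "\<And>l. l \<in> {1..m} \<Longrightarrow> d l > 0"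
    and A: "\<And>i j. i \<in> {1..m} \<Longrightarrow> j \<in> {1..m} \<Longrightarrow> A i j = diag_conj {1..m} U d i j"
    and i: "i \<in> {1..m}" and j: "j \<in> {1..m}"
  shows "mat_powr m A \<alpha> i j = diag_conj {1..m} U (\<lambda>l. d l powr \<alpha>) i j"
proof -
  have "\<exists>V e. orthonormal_rows {1..m} V \<and>
      (\<forall>i\<in>{1..m}. \<forall>j\<in>{1..m}. A i j = diag_conj {1..m} V e i j) \<and>
      mat_powr m A \<alpha> = diag_conj {1..m} V (\<lambda>l. e l powr \<alpha>)"
  proof -
    have "\<exists>B V e. orthonormal_rows {1..m} V \<and> (\<forall>l\<in>{1..m}. e l > 0) \<and>
        (\<forall>i\<in>{1..m}. \<forall>j\<in>{1..m}. A i j = diag_conj {1..m} V e i j) \<and>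
        B = diag_conj {1..m} V (\<lambda>l. e l powr \<alpha>)"
      using U d A by blast
    from someI_ex[OF this[unfolded orthonormal_rows_def diag_conj_def[abs_def]]] show ?thesis
      unfolding mat_powr_def orthonormal_rows_def diag_conj_def[abs_def] by blast
  qed
  then obtain V e where V: "orthonormal_rows {1..m} V"
    and AV: "\<And>i j. i \<in> {1..m} \<Longrightarrow> j \<in> {1..m} \<Longrightarrow> A i j = diag_conj {1..m} V e i j"
    and powr_V: "mat_powr m A \<alpha> = diag_conj {1..m} V (\<lambda>l. e l powr \<alpha>)"
    by blast
  show ?thesis
    unfolding powr_V
    by (rule diag_conj_fun_eq[where f = "\<lambda>x. x powr \<alpha>", symmetric, OF _ U
          orthonormal_rows_transpose[OF U] V orthonormal_rows_transpose[OF V] _ i j])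
      (simp, metis A AV)
qed

section \<open>Lipschitz functions and Riemann sums\<close>

lemma lipschitz_on_real_deriv_bound:
  fixes f :: "real \<Rightarrow> real"
  assumes cont: "continuous_on {a..b} f" and L: "0 \<le> L"
    and deriv: "\<And>x. a < x \<Longrightarrow> x < b \<Longrightarrow> \<exists>D. (f has_real_derivative D) (at x) \<and> \<bar>D\<bar> \<le> L"
  shows "L-lipschitz_on {a..b} f"
proof (rule lipschitz_on_leI[OF _ L])
  fix x y assume x: "x \<in> {a..b}" and y: "y \<in> {a..b}" and "x \<le> y"
  show "dist (f x) (f y) \<le> L * dist x y"
  proof (cases "x = y")
    case False
    with \<open>x \<le> y\<close> have "x < y" by simp
    moreover have "continuous_on {x..y} f"
      using x y by (auto intro: continuous_on_subset[OF cont])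
    moreover have "f differentiable (at z)" if "x < z" "z < y" for z
      using deriv[of z] that x y by (auto simp: real_differentiable_def)
    ultimately obtain l z where z: "x < z" "z < y" and "(f has_real_derivative l) (at z)"
      and mvt: "f y - f x = (y - x) * l"
      using MVT by blast
    moreover obtain D where "(f has_real_derivative D) (at z)" "\<bar>D\<bar> \<le> L"
      using deriv[of z] z x y by auto
    ultimately have "\<bar>l\<bar> \<le> L"
      using DERIV_unique by blast
    have "dist (f x) (f y) = \<bar>(y - x) * l\<bar>"
      unfolding dist_real_def by (metis abs_minus_commute mvt)
    also have "\<dots> = (y - x) * \<bar>l\<bar>"
      using \<open>x < y\<close> by (simp add: abs_mult)
    also have "\<dots> \<le> (y - x) * L"
      using \<open>\<bar>l\<bar> \<le> L\<close> \<open>x < y\<close> by (intro mult_left_mono) auto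
    finally show ?thesis
      using \<open>x < y\<close> by (simp add: dist_real_def mult.commute)
  qed simp
qed

lemma integral_left_endpoint_error:
  fixes g :: "real \<Rightarrow> real"
  assumes lip: "L-lipschitz_on {a..b} g" and "a \<le> b"
  shows "\<bar>integral {a..b} g - (b - a) * g a\<bar> \<le> L * (b - a) * (b - a)"
proof -
  have cont: "continuous_on {a..b} g"
    using lip by (rule lipschitz_on_continuous_on)
  have "integral {a..b} g - (b - a) * g a = integral {a..b} (\<lambda>x. g x - g a)"
    using \<open>a \<le> b\<close> by (simp add: integral_diff integrable_continuous_interval cont)
  also have "\<bar>\<dots>\<bar> \<le> L * (b - a) * (b - a)"
  proof -
    have bound: "\<bar>g x - g a\<bar> \<le> L * (b - a)" if "x \<in> {a..b}" for x
    proof -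
      have "\<bar>g x - g a\<bar> \<le> L * \<bar>x - a\<bar>"
        using lipschitz_onD[OF lip that] \<open>a \<le> b\<close> by (simp add: dist_real_def)
      also have "\<dots> \<le> L * (b - a)"
        using that lipschitz_on_nonneg[OF lip] by (intro mult_left_mono) auto
      finally show ?thesis .
    qed
    have "continuous_on {a..b} (\<lambda>x. g x - g a)"
      by (intro continuous_intros cont)
    from integral_bound[OF \<open>a \<le> b\<close> this, of "L * (b - a)"] bound show ?thesis
      by simp
  qed
  finally show ?thesis .
qed

lemma lipschitz_riemann_sum_error:
  fixes g :: "real \<Rightarrow> real"
  assumes lip: "L-lipschitz_on {0..1} g" and M: "0 < M"
  shows "\<bar>integral {0..1} g - (\<Sum>l<M. g (real l / real M)) / real M\<bar> \<le> L / real M"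
proof -
  define x where "x l = real l / real M" for l
  have x_mono: "x l \<le> x l'" if "l \<le> l'" for l l'
    unfolding x_def using that by (simp add: divide_right_mono)
  have x_Suc: "x (Suc l) - x l = 1 / real M" for l
    unfolding x_def by (simp add: diff_divide_distrib[symmetric])
  have x_range: "{x l..x (Suc l)} \<subseteq> {0..1}" if "l < M" for l
    using that M unfolding x_def by auto
  have int: "g integrable_on {0..1}"
    using lipschitz_on_continuous_on[OF lip] by (rule integrable_continuous_interval)
  have "\<bar>integral {0..x p} g - (\<Sum>l<p. g (x l)) / real M\<bar> \<le> real p * (L / real M / real M)"
    if "p \<le> M" for p
    using that
  proof (induction p)
    case (Suc p)
    have split: "integral {0..x (Suc p)} g = integral {0..x p} g + integral {x p..x (Suc p)} g"
    proof (rule Henstock_Kurzweil_Integration.integral_combine[symmetric])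
      show "0 \<le> x p" "x p \<le> x (Suc p)"
        using x_mono[of 0 p] x_mono[of p "Suc p"] by (simp_all add: x_def)
      show "g integrable_on {0..x (Suc p)}"
        using x_range[of p] Suc.prems x_mono[of 0 p]
        by (intro integrable_on_subinterval[OF int]) (auto simp: x_def)
    qed
    have "\<bar>integral {x p..x (Suc p)} g - g (x p) / real M\<bar> \<le> L / real M / real M"
      using integral_left_endpoint_error[OF lipschitz_on_subset[OF lip x_range] x_mono] Suc.prems
      by (simp add: x_Suc)
    with Suc show ?case
      unfolding split by (simp add: add_divide_distrib algebra_simps)
  qed (simp add: x_def)
  from this[of M] show ?thesis
    using M by (simp add: x_def)
qed

section \<open>Trigonometric sums and bounds\<close>

lemma sum_cos_telescope:
  fixes \<phi> :: real
  shows "2 * sin (\<phi> / 2) * (\<Sum>l=1..m. cos (real l * \<phi>)) = sin ((real m + 1 / 2) * \<phi>) - sin (\<phi> / 2)"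
proof (induction m)
  case 0
  then show ?case by simp
next
  case (Suc m)
  have "2 * sin (\<phi> / 2) * cos (real (Suc m) * \<phi>) =
      sin (real (Suc m) * \<phi> + \<phi> / 2) - sin (real (Suc m) * \<phi> - \<phi> / 2)"
    by (simp add: sin_add sin_diff)
  also have "\<dots> = sin ((real (Suc m) + 1 / 2) * \<phi>) - sin ((real m + 1 / 2) * \<phi>)"
    by (simp add: algebra_simps)
  finally show ?case
    using Suc by (simp add: algebra_simps)
qed

lemma sum_cos_multiple_pi:
  fixes q :: int
  assumes q: "q \<noteq> 0" "\<bar>q\<bar> < 2 * (int m + 1)"
  shows "(\<Sum>l=1..m. cos (real l * (of_int q * pi / real (m + 1)))) = (if even q then -1 else 0)"
proof -
  define \<phi> where "\<phi> = of_int q * pi / real (m + 1)"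
  have "of_int \<bar>q\<bar> < (of_int (2 * (int m + 1)) :: real)"
    using q(2) by (simp only: of_int_less_iff)
  then have "\<bar>of_int q\<bar> < 2 * real (m + 1)"
    by simp
  then have "\<bar>of_int q\<bar> / (2 * real (m + 1)) < 1"
    by simp
  then have "pi * (\<bar>of_int q\<bar> / (2 * real (m + 1))) < pi * 1"
    by (intro mult_strict_left_mono) auto
  then have "\<bar>\<phi> / 2\<bar> < pi"
    unfolding \<phi>_def by (simp add: abs_mult mult_ac)
  moreover have "\<phi> / 2 \<noteq> 0"
    using q(1) unfolding \<phi>_def by simp
  ultimately have sin_half: "sin (\<phi> / 2) \<noteq> 0"
    using sin_eq_0_pi[of "\<phi> / 2"] by linarith
  have "(real m + 1 / 2) * \<phi> = pi * of_int q - \<phi> / 2"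
    unfolding \<phi>_def by (simp add: field_simps)
  then have "sin ((real m + 1 / 2) * \<phi>) = - cos (pi * of_int q) * sin (\<phi> / 2)"
    by (simp add: sin_diff)
  with sum_cos_telescope[of \<phi> m]
  have "sin (\<phi> / 2) * (2 * (\<Sum>l=1..m. cos (real l * \<phi>)) + cos (pi * of_int q) + 1) = 0"
    by (simp add: algebra_simps)
  with sin_half have "2 * (\<Sum>l=1..m. cos (real l * \<phi>)) = - cos (pi * of_int q) - 1"
    by simp
  then show ?thesis
    unfolding \<phi>_def by (simp split: if_splits)
qed

text \<open>Allowing p = 0 and p = m + 1, where the sine vector vanishes, covers the boundary
  rows of hbar.\<close>
lemma sum_sin_mult_sin:
  assumes "p \<le> m + 1" "j \<in> {1..m}"
  shows "(\<Sum>l=1..m. sin (real p * pi * (real l / real (m + 1))) * sin (real j * pi * (real l / real (m + 1))))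
    = (if p = j then (real m + 1) / 2 else 0)"
proof -
  define S where "S q = (\<Sum>l=1..m. cos (real l * (of_int q * pi / real (m + 1))))" for q :: int
  have "(\<Sum>l=1..m. sin (real p * pi * (real l / real (m + 1))) * sin (real j * pi * (real l / real (m + 1))))
      = (S (int p - int j) - S (int p + int j)) / 2"
    unfolding S_def sin_times_sin sum_divide_distrib[symmetric] sum_subtractf[symmetric]
    by (intro arg_cong[where f = "\<lambda>x. x / 2"] sum.cong refl arg_cong2[where f = "(-)"])
      (simp_all add: algebra_simps add_divide_distrib diff_divide_distrib)
  also have "\<dots> = (if p = j then (real m + 1) / 2 else 0)"
  proof (cases "p = j")
    case True
    then show ?thesis
      using assms sum_cos_multiple_pi[of "int p + int j" m] by (simp add: S_def)
  next
    case False
    have "\<bar>int p - int j\<bar> < 2 * (int m + 1)" "\<bar>int p + int j\<bar> < 2 * (int m + 1)"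
      using assms by auto
    moreover have "even (int p - int j) \<longleftrightarrow> even (int p + int j)"
      by presburger
    ultimately show ?thesis
      using False assms sum_cos_multiple_pi[of "int p + int j" m] sum_cos_multiple_pi[of "int p - int j" m]
      unfolding S_def by auto
  qed
  finally show ?thesis .
qed

lemma sin_half_pos: "0 < x \<Longrightarrow> x \<le> 1 \<Longrightarrow> sin (pi * x / 2) > 0"
  by (intro sin_gt_zero) auto

lemma abs_sin_nat_mult_le: "\<bar>sin (real p * y)\<bar> \<le> real p * \<bar>sin y\<bar>"
proof (induction p)
  case (Suc p)
  have "real (Suc p) * y = real p * y + y"
    by (simp add: algebra_simps)
  then have "\<bar>sin (real (Suc p) * y)\<bar> = \<bar>sin (real p * y) * cos y + cos (real p * y) * sin y\<bar>"
    by (simp only: sin_add)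
  also have "\<dots> \<le> \<bar>sin (real p * y)\<bar> * \<bar>cos y\<bar> + \<bar>cos (real p * y)\<bar> * \<bar>sin y\<bar>"
    by (metis abs_mult abs_triangle_ineq)
  also have "\<dots> \<le> \<bar>sin (real p * y)\<bar> + \<bar>sin y\<bar>"
    by (intro add_mono mult_left_le mult_left_le_one_le) auto
  finally show ?case
    using Suc by (simp add: algebra_simps)
qed simp

lemma abs_sin_mult_pi_le: "\<bar>sin (real j * pi * x)\<bar> \<le> 2 * real j * \<bar>sin (pi * x / 2)\<bar>"
  using abs_sin_nat_mult_le[of "2 * j" "pi * x / 2"] by (simp add: mult_ac)

lemma abs_sin_mode_le:
  assumes "i \<le> n" "0 \<le> x" "x \<le> 1"
  shows "\<bar>sin (real i * pi * x)\<bar> \<le> 2 * real n * sin (pi * x / 2)"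
proof -
  have "0 \<le> sin (pi * x / 2)"
    using assms by (intro sin_ge_zero) auto
  then have "2 * real i * \<bar>sin (pi * x / 2)\<bar> \<le> 2 * real n * sin (pi * x / 2)"
    using assms(1) by (simp add: mult_right_mono)
  with abs_sin_mult_pi_le[of i x] show ?thesis
    by linarith
qed

text \<open>Think of s = sin(pi x/2) and of t = sin(j pi x) with j \<le> n: t vanishes like n s,
  which compensates the singular weight s powr (2 alpha) when alpha < 0 (split at s = 1/n).\<close>
lemma powr_mult_abs_le:
  fixes s t n K \<alpha> :: real
  assumes s: "0 < s" "s \<le> 1" and n: "0 < n" and \<alpha>: "-1/2 \<le> \<alpha>" and K: "1 \<le> K"
    and t: "\<bar>t\<bar> \<le> 1" "\<bar>t\<bar> \<le> K * n * s"
  shows "s powr (2 * \<alpha>) * \<bar>t\<bar> \<le> K * (if 0 \<le> \<alpha> then 1 else n powr (- 2 * \<alpha>))"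
proof (cases "0 \<le> \<alpha>")
  case True
  have "s powr (2 * \<alpha>) \<le> 1"
    using True s by (intro powr_le1) auto
  then have "s powr (2 * \<alpha>) * \<bar>t\<bar> \<le> 1 * 1"
    using t by (intro mult_mono) auto
  then show ?thesis
    using True K by simp
next
  case False
  show ?thesis
  proof (cases "s \<le> 1 / n")
    case True
    have "s powr (2 * \<alpha>) * \<bar>t\<bar> \<le> s powr (2 * \<alpha>) * (K * n * s)"
      using t by (intro mult_left_mono) auto
    also have "\<dots> = K * n * s powr (2 * \<alpha> + 1)"
      using s by (simp add: powr_add)
    also have "\<dots> \<le> K * n * (1 / n) powr (2 * \<alpha> + 1)"
      using True s n K \<alpha> by (intro mult_left_mono powr_mono2) auto
    also have "\<dots> = K * n powr (- 2 * \<alpha>)"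
      using n by (simp add: powr_divide powr_add powr_minus_divide)
    finally show ?thesis
      using False by simp
  next
    case False': False
    have "s powr (2 * \<alpha>) \<le> (1 / n) powr (2 * \<alpha>)"
      using False False' n by (intro powr_mono2') auto
    also have "\<dots> = n powr (- 2 * \<alpha>)"
      using n by (simp add: powr_divide powr_minus_divide)
    finally have "s powr (2 * \<alpha>) * \<bar>t\<bar> \<le> n powr (- 2 * \<alpha>) * K"
      using t K by (intro mult_mono) auto
    then show ?thesis
      using False by (simp add: mult.commute)
  qed
qed

section \<open>Spectral decomposition of the discrete Dirichlet Laplacian\<close>

definition sine_basis :: "nat \<Rightarrow> nat \<Rightarrow> nat \<Rightarrow> real" where
  "sine_basis m i l = sqrt (2 / real (m + 1)) * sin (real i * pi * (real l / real (m + 1)))"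

definition laplacian_eigenvalue :: "nat \<Rightarrow> nat \<Rightarrow> real" where
  "laplacian_eigenvalue m l = (2 * sin (pi * (real l / real (m + 1)) / 2))\<^sup>2"

lemma sine_basis_mult:
  "sine_basis m i l * c * sine_basis m j l =
    2 / real (m + 1) * (c * sin (real i * pi * (real l / real (m + 1)))) * sin (real j * pi * (real l / real (m + 1)))"
proof -
  define r where "r = sqrt (2 / real (m + 1))"
  have "r * r = 2 / real (m + 1)"
    unfolding r_def by simp
  then show ?thesis
    unfolding sine_basis_def r_def[symmetric]
    by (metis (no_types, opaque_lifting) mult.assoc mult.commute mult.left_commute)
qed

lemma sine_basis_orthonormal: "orthonormal_rows {1..m} (sine_basis m)"
  unfolding orthonormal_rows_def
proof (intro ballI)
  fix i j assume i: "i \<in> {1..m}" and j: "j \<in> {1..m}"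
  have "(\<Sum>l\<in>{1..m}. sine_basis m i l * sine_basis m j l) =
      (\<Sum>l\<in>{1..m}. sine_basis m i l * 1 * sine_basis m j l)"
    by simp
  also have "\<dots> = 2 / real (m + 1) *
      (\<Sum>l=1..m. sin (real i * pi * (real l / real (m + 1))) * sin (real j * pi * (real l / real (m + 1))))"
    unfolding sine_basis_mult sum_distrib_left by (simp only: mult.left_neutral mult.assoc)
  also have "\<dots> = (if i = j then 1 else 0)"
  proof -
    have i_le: "i \<le> m + 1"
      using i by simp
    show ?thesis
      unfolding sum_sin_mult_sin[OF i_le j] by simp
  qed
  finally show "(\<Sum>l\<in>{1..m}. sine_basis m i l * sine_basis m j l) = (if i = j then 1 else 0)" .
qed

lemma sin_half_node_pos:
  assumes "l \<in> {1..m}"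
  shows "0 < sin (pi * (real l / real (m + 1)) / 2)"
proof -
  have "0 < real l / real (m + 1)" "real l / real (m + 1) \<le> 1"
    using assms by auto
  then show ?thesis
    by (rule sin_half_pos)
qed

lemma laplacian_eigenvalue_pos:
  assumes "l \<in> {1..m}"
  shows "laplacian_eigenvalue m l > 0"
  using sin_half_node_pos[OF assms] unfolding laplacian_eigenvalue_def by simp

lemma laplacian_eigenvalue_mult_sin:
  assumes "1 \<le> i"
  shows "laplacian_eigenvalue m l * sin (real i * pi * (real l / real (m + 1))) =
    2 * sin (real i * pi * (real l / real (m + 1)))
      - sin (real (i + 1) * pi * (real l / real (m + 1)))
      - sin (real (i - 1) * pi * (real l / real (m + 1)))"
proof -
  define t where "t = real l / real (m + 1)"
  define a b where "a = real i * pi * t" and "b = pi * t"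
  have ab: "real (i + 1) * pi * t = a + b" "real (i - 1) * pi * t = a - b"
    using assms unfolding a_def b_def by (simp_all add: of_nat_diff algebra_simps)
  have eigenvalue: "laplacian_eigenvalue m l = 2 - 2 * cos b"
    using cos_double_sin[of "b / 2"] unfolding laplacian_eigenvalue_def t_def[symmetric] b_def
    by (simp add: power_mult_distrib)
  show ?thesis
    unfolding t_def[symmetric] ab a_def[symmetric] eigenvalue by (simp add: sin_add sin_diff algebra_simps)
qed

lemma hbar_eq_diag_conj:
  assumes i: "i \<in> {1..m}" and j: "j \<in> {1..m}"
  shows "hbar m i j = diag_conj {1..m} (sine_basis m) (laplacian_eigenvalue m) i j"
proof -
  define s where "s p l = sin (real p * pi * (real l / real (m + 1)))" for p l
  have eigen: "laplacian_eigenvalue m l * s i l = 2 * s i l - s (i + 1) l - s (i - 1) l" for l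
    unfolding s_def using i by (intro laplacian_eigenvalue_mult_sin) simp
  have "diag_conj {1..m} (sine_basis m) (laplacian_eigenvalue m) i j =
      2 / real (m + 1) * (\<Sum>l=1..m. (laplacian_eigenvalue m l * s i l) * s j l)"
    unfolding diag_conj_def sine_basis_mult s_def sum_distrib_left by (simp only: mult.assoc)
  also have "\<dots> = 2 / real (m + 1) *
      (2 * (\<Sum>l=1..m. s i l * s j l) - (\<Sum>l=1..m. s (i + 1) l * s j l) - (\<Sum>l=1..m. s (i - 1) l * s j l))"
    by (simp only: eigen left_diff_distrib mult.assoc sum_subtractf flip: sum_distrib_left)
  also have "\<dots> = 2 / real (m + 1) * (2 * (if i = j then (real m + 1) / 2 else 0)
      - (if i + 1 = j then (real m + 1) / 2 else 0) - (if i - 1 = j then (real m + 1) / 2 else 0))"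
  proof -
    have p: "i \<le> m + 1" "i + 1 \<le> m + 1" "i - 1 \<le> m + 1"
      using i by auto
    show ?thesis
      unfolding s_def sum_sin_mult_sin[OF p(1) j] sum_sin_mult_sin[OF p(2) j] sum_sin_mult_sin[OF p(3) j] ..
  qed
  also have "\<dots> = hbar m i j"
    using i j unfolding hbar_def by (auto simp: field_simps)
  finally show ?thesis ..
qed

section \<open>The integrand of h_N\<close>

definition h_N_integrand :: "real \<Rightarrow> nat \<Rightarrow> nat \<Rightarrow> real \<Rightarrow> real" where
  "h_N_integrand \<alpha> j k x = sin (pi * x / 2) powr (2 * \<alpha>) * sin (real j * pi * x) * sin (real k * pi * x)"

lemma h_N_eq_integral: "h_N \<alpha> j k = 2 powr (1 + 2 * \<alpha>) * integral {0..1} (h_N_integrand \<alpha> j k)"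
  unfolding h_N_def h_N_integrand_def[abs_def] ..

lemma laplacian_eigenvalue_powr:
  assumes "l \<in> {1..m}"
  shows "laplacian_eigenvalue m l powr \<alpha> = 2 powr (2 * \<alpha>) * sin (pi * (real l / real (m + 1)) / 2) powr (2 * \<alpha>)"
proof -
  define s where "s = sin (pi * (real l / real (m + 1)) / 2)"
  have "0 < s"
    unfolding s_def using assms by (rule sin_half_node_pos)
  then have "laplacian_eigenvalue m l = (2 * s) powr 2"
    unfolding laplacian_eigenvalue_def s_def[symmetric] by simp
  then have "laplacian_eigenvalue m l powr \<alpha> = (2 * s) powr (2 * \<alpha>)"
    by (simp only: powr_powr)
  also have "\<dots> = 2 powr (2 * \<alpha>) * s powr (2 * \<alpha>)"
    by (rule powr_mult)
  finally show ?thesis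
    unfolding s_def .
qed

text \<open>The node l = 0 contributes nothing, so the eigen-sum over l = 1..m is a complete
  left Riemann sum on m + 1 nodes.\<close>
lemma mat_powr_hbar_eq_riemann_sum:
  assumes i: "i \<in> {1..m}" and j: "j \<in> {1..m}"
  shows "mat_powr m (hbar m) \<alpha> i j =
    2 powr (1 + 2 * \<alpha>) * ((\<Sum>l<m + 1. h_N_integrand \<alpha> i j (real l / real (m + 1))) / real (m + 1))"
proof -
  have "mat_powr m (hbar m) \<alpha> i j = diag_conj {1..m} (sine_basis m) (\<lambda>l. laplacian_eigenvalue m l powr \<alpha>) i j"
    by (rule mat_powr_eq_diag_conj[OF sine_basis_orthonormal laplacian_eigenvalue_pos hbar_eq_diag_conj i j])
  also have "\<dots> = (\<Sum>l\<in>{1..m}. 2 powr (1 + 2 * \<alpha>) * (h_N_integrand \<alpha> i j (real l / real (m + 1)) / real (m + 1)))"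
    unfolding diag_conj_def sine_basis_mult
    by (intro sum.cong refl) (simp add: laplacian_eigenvalue_powr h_N_integrand_def powr_add)
  also have "\<dots> = 2 powr (1 + 2 * \<alpha>) * ((\<Sum>l\<in>{1..m}. h_N_integrand \<alpha> i j (real l / real (m + 1))) / real (m + 1))"
    by (simp only: sum_distrib_left sum_divide_distrib)
  also have "(\<Sum>l\<in>{1..m}. h_N_integrand \<alpha> i j (real l / real (m + 1))) =
      (\<Sum>l<m + 1. h_N_integrand \<alpha> i j (real l / real (m + 1)))"
  proof -
    have split_0: "(\<Sum>l<m + 1. g l) = g 0 + (\<Sum>l\<in>{1..m}. g l)" for g :: "nat \<Rightarrow> real"
      by (simp add: sum.atLeast1_atMost_eq sum.lessThan_Suc_shift del: sum.lessThan_Suc)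
    show ?thesis
      unfolding split_0 by (simp add: h_N_integrand_def)
  qed
  finally show ?thesis .
qed

lemma h_N_integrand_has_real_derivative:
  assumes "0 < x" "x \<le> 1"
  shows "(h_N_integrand \<alpha> j k has_real_derivative
      \<alpha> * pi * cos (pi * x / 2) * sin (pi * x / 2) powr (2 * \<alpha> - 1) * sin (real j * pi * x) * sin (real k * pi * x)
      + sin (pi * x / 2) powr (2 * \<alpha>) * (real j * pi * cos (real j * pi * x)) * sin (real k * pi * x)
      + sin (pi * x / 2) powr (2 * \<alpha>) * (real k * pi * cos (real k * pi * x)) * sin (real j * pi * x)) (at x)"
proof -
  have "((\<lambda>x. sin (pi * x / 2)) has_real_derivative cos (pi * x / 2) * (pi / 2)) (at x)"
    by (auto intro!: derivative_eq_intros)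
  from DERIV_fun_powr[OF this sin_half_pos[OF assms], of "2 * \<alpha>"]
  have weight: "((\<lambda>x. sin (pi * x / 2) powr (2 * \<alpha>)) has_real_derivative
      \<alpha> * pi * cos (pi * x / 2) * sin (pi * x / 2) powr (2 * \<alpha> - 1)) (at x)"
    by (simp add: algebra_simps)
  have mode: "((\<lambda>x. sin (real i * pi * x)) has_real_derivative real i * pi * cos (real i * pi * x)) (at x)"
    for i :: nat
    by (auto intro!: derivative_eq_intros)
  show ?thesis
    unfolding h_N_integrand_def[abs_def]
    by (rule DERIV_cong[OF DERIV_mult'[OF DERIV_mult'[OF weight mode] mode]]) (simp add: algebra_simps)
qed

lemma sin_half_powr_mult_mode_le:
  assumes x: "0 < x" "x \<le> 1" and \<alpha>: "-1/2 \<le> \<alpha>" and i: "i \<in> {1..n}"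
  shows "sin (pi * x / 2) powr (2 * \<alpha>) * \<bar>sin (real i * pi * x)\<bar>
    \<le> 2 * (if 0 \<le> \<alpha> then 1 else real n powr (- 2 * \<alpha>))"
  using x \<alpha> i sin_half_pos[OF x] abs_sin_mode_le[of i n x]
  by (intro powr_mult_abs_le) auto

lemma abs_h_N_integrand_le:
  assumes x: "0 \<le> x" "x \<le> 1" and \<alpha>: "-1/2 \<le> \<alpha>" and j: "j \<in> {1..n}"
  shows "\<bar>h_N_integrand \<alpha> j k x\<bar> \<le> 2 * (if 0 \<le> \<alpha> then 1 else real n powr (- 2 * \<alpha>)) * \<bar>sin (real k * pi * x)\<bar>"
proof (cases "x = 0")
  case False
  have "\<bar>h_N_integrand \<alpha> j k x\<bar> =
      sin (pi * x / 2) powr (2 * \<alpha>) * \<bar>sin (real j * pi * x)\<bar> * \<bar>sin (real k * pi * x)\<bar>"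
    unfolding h_N_integrand_def by (simp add: abs_mult)
  with sin_half_powr_mult_mode_le[of x \<alpha> j n] x False \<alpha> j show ?thesis
    by (simp add: mult_right_mono)
qed (simp add: h_N_integrand_def)

lemma continuous_on_h_N_integrand:
  assumes \<alpha>: "-1/2 \<le> \<alpha>" and j: "j \<in> {1..n}"
  shows "continuous_on {0..1} (h_N_integrand \<alpha> j k)"
  unfolding continuous_on_eq_continuous_within
proof
  fix x :: real assume x: "x \<in> {0..1}"
  show "continuous (at x within {0..1}) (h_N_integrand \<alpha> j k)"
  proof (cases "x = 0")
    case False
    then have "0 < x" "x \<le> 1"
      using x by auto
    from DERIV_isCont[OF h_N_integrand_has_real_derivative[OF this]] show ?thesis
      by (rule continuous_at_imp_continuous_at_within)
  next
    case True
    define W where "W = 2 * (if 0 \<le> \<alpha> then 1 else real n powr (- 2 * \<alpha>))"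
    have "norm (h_N_integrand \<alpha> j k y) \<le> W * \<bar>sin (real k * pi * y)\<bar>" if "y \<in> {0..1}" for y
      using abs_h_N_integrand_le[OF _ _ \<alpha> j] that unfolding W_def by simp
    then have "\<forall>\<^sub>F y in at 0 within {0..1}. norm (h_N_integrand \<alpha> j k y) \<le> W * \<bar>sin (real k * pi * y)\<bar>"
      unfolding eventually_at_filter by (intro always_eventually) blast
    moreover have "((\<lambda>y. W * \<bar>sin (real k * pi * y)\<bar>) \<longlongrightarrow> W * \<bar>sin (real k * pi * 0)\<bar>) (at 0 within {0..1})"
      by (intro tendsto_intros)
    then have "((\<lambda>y. W * \<bar>sin (real k * pi * y)\<bar>) \<longlongrightarrow> 0) (at 0 within {0..1})"
      by simp
    ultimately have "(h_N_integrand \<alpha> j k \<longlongrightarrow> 0) (at 0 within {0..1})"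
      by (rule Lim_null_comparison)
    then show ?thesis
      unfolding True continuous_within by (simp add: h_N_integrand_def)
  qed
qed

lemma abs_weight_deriv_term_le:
  assumes x: "0 < x" "x \<le> 1" and \<alpha>: "-1/2 \<le> \<alpha>" and j: "j \<in> {1..n}" and k: "k \<in> {1..n}"
  shows "\<bar>\<alpha> * pi * cos (pi * x / 2) * sin (pi * x / 2) powr (2 * \<alpha> - 1) * sin (real j * pi * x) * sin (real k * pi * x)\<bar>
    \<le> \<bar>\<alpha>\<bar> * pi * 1 * (2 * (if 0 \<le> \<alpha> then 1 else real n powr (- 2 * \<alpha>))) * (2 * real n)"
proof -
  define s where "s = sin (pi * x / 2)"
  have s: "0 < s"
    unfolding s_def using x by (rule sin_half_pos)
  have "\<bar>sin (real k * pi * x)\<bar> / s \<le> 2 * real n"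
    using abs_sin_mode_le[of k n x] x k s unfolding s_def[symmetric] by (simp add: pos_divide_le_eq)
  moreover have "\<bar>\<alpha>\<bar> * pi * \<bar>cos (pi * x / 2)\<bar> \<le> \<bar>\<alpha>\<bar> * pi * 1"
    by (intro mult_left_mono) auto
  ultimately have "\<bar>\<alpha>\<bar> * pi * \<bar>cos (pi * x / 2)\<bar> * (s powr (2 * \<alpha>) * \<bar>sin (real j * pi * x)\<bar>)
      * (\<bar>sin (real k * pi * x)\<bar> / s)
      \<le> \<bar>\<alpha>\<bar> * pi * 1 * (2 * (if 0 \<le> \<alpha> then 1 else real n powr (- 2 * \<alpha>))) * (2 * real n)"
    using sin_half_powr_mult_mode_le[OF x \<alpha> j] s unfolding s_def[symmetric]
    by (intro mult_mono[OF mult_mono]) auto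
  then show ?thesis
    using s unfolding s_def[symmetric] by (simp add: abs_mult powr_diff)
qed

lemma abs_mode_deriv_term_le:
  assumes x: "0 < x" "x \<le> 1" and \<alpha>: "-1/2 \<le> \<alpha>" and i: "i \<in> {1..n}" and i': "i' \<in> {1..n}"
  shows "\<bar>sin (pi * x / 2) powr (2 * \<alpha>) * (real i * pi * cos (real i * pi * x)) * sin (real i' * pi * x)\<bar>
    \<le> real n * pi * 1 * (2 * (if 0 \<le> \<alpha> then 1 else real n powr (- 2 * \<alpha>)))"
proof -
  have "real i * pi * \<bar>cos (real i * pi * x)\<bar> \<le> real n * pi * 1"
    using i by (intro mult_mono) auto
  then have "real i * pi * \<bar>cos (real i * pi * x)\<bar> * (sin (pi * x / 2) powr (2 * \<alpha>) * \<bar>sin (real i' * pi * x)\<bar>)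
      \<le> real n * pi * 1 * (2 * (if 0 \<le> \<alpha> then 1 else real n powr (- 2 * \<alpha>)))"
    by (rule mult_mono[OF _ sin_half_powr_mult_mode_le[OF x \<alpha> i']]) auto
  then show ?thesis
    by (simp add: abs_mult mult_ac)
qed

lemma h_N_integrand_deriv_bound:
  assumes x: "0 < x" "x \<le> 1" and \<alpha>: "-1/2 \<le> \<alpha>" and j: "j \<in> {1..n}" and k: "k \<in> {1..n}"
  shows "\<exists>D. (h_N_integrand \<alpha> j k has_real_derivative D) (at x) \<and>
    \<bar>D\<bar> \<le> 4 * pi * (\<bar>\<alpha>\<bar> + 1) * (if 0 \<le> \<alpha> then real n else real n powr (1 - 2 * \<alpha>))"
proof -
  define W where "W = (if 0 \<le> \<alpha> then 1 else real n powr (- 2 * \<alpha>))"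
  define a b c where
    "a = \<alpha> * pi * cos (pi * x / 2) * sin (pi * x / 2) powr (2 * \<alpha> - 1) * sin (real j * pi * x) * sin (real k * pi * x)"
    and "b = sin (pi * x / 2) powr (2 * \<alpha>) * (real j * pi * cos (real j * pi * x)) * sin (real k * pi * x)"
    and "c = sin (pi * x / 2) powr (2 * \<alpha>) * (real k * pi * cos (real k * pi * x)) * sin (real j * pi * x)"
  have "(h_N_integrand \<alpha> j k has_real_derivative a + b + c) (at x)"
    unfolding a_def b_def c_def using x by (rule h_N_integrand_has_real_derivative)
  moreover have "\<bar>a + b + c\<bar> \<le> 4 * pi * (\<bar>\<alpha>\<bar> + 1) * (real n * W)"
  proof -
    have "\<bar>a\<bar> \<le> \<bar>\<alpha>\<bar> * pi * 1 * (2 * W) * (2 * real n)"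
      "\<bar>b\<bar> \<le> real n * pi * 1 * (2 * W)" "\<bar>c\<bar> \<le> real n * pi * 1 * (2 * W)"
      unfolding a_def b_def c_def W_def
      using abs_weight_deriv_term_le[OF x \<alpha> j k] abs_mode_deriv_term_le[OF x \<alpha> j k]
        abs_mode_deriv_term_le[OF x \<alpha> k j] by auto
    moreover have "\<bar>\<alpha>\<bar> * pi * 1 * (2 * W) * (2 * real n) + 2 * (real n * pi * 1 * (2 * W))
        = 4 * pi * (\<bar>\<alpha>\<bar> + 1) * (real n * W)"
      by (simp add: algebra_simps)
    ultimately show ?thesis
      using abs_triangle_ineq[of "a + b" c] abs_triangle_ineq[of a b] by linarith
  qed
  moreover have "real n * W = (if 0 \<le> \<alpha> then real n else real n powr (1 - 2 * \<alpha>))"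
    using j unfolding W_def by (simp add: powr_diff powr_minus_divide)
  ultimately show ?thesis
    by auto
qed

lemma lipschitz_h_N_integrand:
  assumes \<alpha>: "-1/2 \<le> \<alpha>" and j: "j \<in> {1..n}" and k: "k \<in> {1..n}"
  shows "(4 * pi * (\<bar>\<alpha>\<bar> + 1) * (if 0 \<le> \<alpha> then real n else real n powr (1 - 2 * \<alpha>)))-lipschitz_on {0..1}
    (h_N_integrand \<alpha> j k)"
  by (rule lipschitz_on_real_deriv_bound[OF continuous_on_h_N_integrand[OF \<alpha> j]])
    (use h_N_integrand_deriv_bound[OF _ _ \<alpha> j k] in auto)

lemma abs_h_Lambda_diff_h_N_eq:
  assumes "n \<le> m" and j: "j \<in> {1..n}" and k: "k \<in> {1..n}"
  shows "\<bar>h_Lambda \<alpha> n m j k - h_N \<alpha> j k\<bar> = 2 powr (1 + 2 * \<alpha>) *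
    \<bar>integral {0..1} (h_N_integrand \<alpha> j k)
      - (\<Sum>l<m + 1. h_N_integrand \<alpha> j k (real l / real (m + 1))) / real (m + 1)\<bar>"
proof -
  have jm: "j \<in> {1..m}" and km: "k \<in> {1..m}"
    using assms by auto
  define R where "R = (\<Sum>l<m + 1. h_N_integrand \<alpha> j k (real l / real (m + 1))) / real (m + 1)"
  define I where "I = integral {0..1} (h_N_integrand \<alpha> j k)"
  have "h_Lambda \<alpha> n m j k - h_N \<alpha> j k = 2 powr (1 + 2 * \<alpha>) * (R - I)"
    using j k unfolding h_Lambda_def mat_powr_hbar_eq_riemann_sum[OF jm km] h_N_eq_integral R_def I_def
    by (simp add: right_diff_distrib)
  then show ?thesis
    unfolding R_def[symmetric] I_def[symmetric] by (simp add: abs_mult abs_minus_commute)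
qed

theorem lemma3p5:
  fixes \<alpha> :: real
  assumes "\<alpha> \<ge> -1/2"
  shows "\<exists>C. \<forall>n m j k. n \<le> m \<longrightarrow> j \<in> {1..n} \<longrightarrow> k \<in> {1..n} \<longrightarrow>
           \<bar>h_Lambda \<alpha> n m j k - h_N \<alpha> j k\<bar> \<le>
             C * (if \<alpha> \<ge> 0 then real n / real m else real n powr (1 - 2 * \<alpha>) / real m)"
proof (intro exI allI impI)
  fix n m j k :: nat
  assume nm: "n \<le> m" and j: "j \<in> {1..n}" and k: "k \<in> {1..n}"
  define N where "N = (if 0 \<le> \<alpha> then real n else real n powr (1 - 2 * \<alpha>))"
  define c where "c = 4 * pi * (\<bar>\<alpha>\<bar> + 1)"
  have "0 \<le> c * N" "0 < m"
    using nm j unfolding c_def N_def by auto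
  have "\<bar>h_Lambda \<alpha> n m j k - h_N \<alpha> j k\<bar> \<le> 2 powr (1 + 2 * \<alpha>) * (c * N / real (m + 1))"
    using lipschitz_riemann_sum_error[OF lipschitz_h_N_integrand[OF assms j k], of "m + 1"]
    unfolding abs_h_Lambda_diff_h_N_eq[OF nm j k] c_def N_def by (intro mult_left_mono) auto
  also have "\<dots> \<le> 2 powr (1 + 2 * \<alpha>) * (c * N / real m)"
    using \<open>0 \<le> c * N\<close> \<open>0 < m\<close> by (intro mult_left_mono divide_left_mono) auto
  also have "\<dots> = 2 powr (1 + 2 * \<alpha>) * c *
      (if \<alpha> \<ge> 0 then real n / real m else real n powr (1 - 2 * \<alpha>) / real m)"
    unfolding N_def by simp
  finally show "\<bar>h_Lambda \<alpha> n m j k - h_N \<alpha> j k\<bar> \<le> 2 powr (1 + 2 * \<alpha>) * c *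
      (if \<alpha> \<ge> 0 then real n / real m else real n powr (1 - 2 * \<alpha>) / real m)" .
qed

end
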